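(* In any execution of the algorithm described in the context on a camera object $S$ and an associated versioned CAS object $O$, suppose an invocation of initTS makes the timestamp of some VNode $n$ valid. Then $n$ is the head of the version list of $O$ both when that initTS reads $S.\mathit{timestamp}$ and when it performs its CAS on $n.ts$.
   Context: Camera $S$ has an integer field timestamp, initially 0; takeSnapshot(): read $t:=S.\mathit{timestamp}$, perform CAS$(S.\mathit{timestamp},t,t+1)$, return $t$. A VNode has fields val and nextv (both immutable after creation) and ts (an integer or special value TBD, initially TBD). Versioned CAS object $O$ has a field $\mathit{VHead}$. Constructor with value $v$: $\mathit{VHead}:=$ new VNode(val $v$, nextv NULL); initTS($\mathit{VHead}$). initTS($n$): if $n.ts=$TBD, read $c:=S.\mathit{timestamp}$ and CAS$(n.ts,\mathrm{TBD},c)$. readSnapshot($ts$): $node:=\mathit{VHead}$; initTS($node$); while $node.ts>ts$, $node:=node.nextv$; return $node.val$. vRead(): $h:=\mathit{VHead}$; initTS($h$); return $h.val$. vCAS(oldV,newV): $h:=\mathit{VHead}$; initTS($h$); if $h.val\neq$ oldV return false; if newV $=$ oldV return true; $m:=$ new VNode(val newV, nextv $h$); if CAS$(\mathit{VHead},h,m)$ succeeds, initTS($m$) and return true; else delete $m$, call initTS on the current value of $\mathit{VHead}$, return false. The version list of $O$ is obtained by starting at the VNode pointed to by $\mathit{VHead}$ and following nextv pointers; its head is the VNode pointed to by $\mathit{VHead}$. A VNode's timestamp is valid if its ts field is not TBD, invalid otherwise; "makes the timestamp valid" means its CAS on $n.ts$ changes it from TBD to an integer. *)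

theory Defs
  imports Main
begin

text \<open>
  Every shared-memory access (read / CAS of S.timestamp, read / CAS of VHead,
  read / CAS of a ts field) is one atomic step of one process.  Fields val and
  nextv are immutable, so reading them is merged into neighbouring steps; the
  allocation of a new VNode is private until published and is merged into the
  CAS on VHead.  VNodes are identified by natural numbers; TBD is None.
\<close>

text \<open>Continuation after an initTS call: who called it.\<close>
datatype 'v cont =
    CCtor
  | CRS int        \<comment> \<open>readSnapshot(ts)\<close>
  | CVR            \<comment> \<open>vRead\<close>
  | CVC 'v 'v      \<comment> \<open>vCAS(oldV,newV), before comparing h.val\<close>
  | CRet           \<comment> \<open>vCAS: initTS(m) after success, or initTS(VHead) after failure\<close>

datatype iphase =
    IChk           \<comment> \<open>about to read n.ts\<close>
  | IRead          \<comment> \<open>about to read S.timestamp\<close>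
  | ICas int       \<comment> \<open>about to CAS(n.ts, TBD, c)\<close>

datatype 'v pc =
    Idle
  | TakeRead                 \<comment> \<open>takeSnapshot: about to read S.timestamp\<close>
  | TakeCas int              \<comment> \<open>takeSnapshot: about to CAS(S.timestamp,t,t+1)\<close>
  | RSHead int               \<comment> \<open>readSnapshot(ts): about to read VHead\<close>
  | RSLoop int nat           \<comment> \<open>readSnapshot(ts): loop test at node\<close>
  | VRHead                   \<comment> \<open>vRead: about to read VHead\<close>
  | VCHead 'v 'v             \<comment> \<open>vCAS: about to read VHead\<close>
  | VCCas 'v 'v nat          \<comment> \<open>vCAS: compare h.val, then CAS(VHead,h,m)\<close>
  | VCFailHead               \<comment> \<open>vCAS failed: about to read VHead\<close>
  | Init nat iphase "'v cont"

record ('p, 'v) state =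
  stamp :: int                     \<comment> \<open>S.timestamp\<close>
  vhead :: nat                     \<comment> \<open>O.VHead\<close>
  tsf   :: "nat \<Rightarrow> int option"      \<comment> \<open>ts fields, None = TBD\<close>
  valf  :: "nat \<Rightarrow> 'v"
  nxt   :: "nat \<Rightarrow> nat option"      \<comment> \<open>nextv fields, None = NULL\<close>
  alloc :: nat                     \<comment> \<open>next fresh node identifier\<close>
  ctor_started :: bool
  ctor_done :: bool
  pcs :: "'p \<Rightarrow> 'v pc"

definition setpc :: "('p, 'v) state \<Rightarrow> 'p \<Rightarrow> 'v pc \<Rightarrow> ('p, 'v) state" where
  "setpc s p x = s\<lparr>pcs := (pcs s)(p := x)\<rparr>"

fun cont_next :: "'v cont \<Rightarrow> nat \<Rightarrow> 'v pc" where
  "cont_next CCtor n = Idle"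
| "cont_next (CRS t) n = RSLoop t n"
| "cont_next CVR n = Idle"
| "cont_next (CVC a b) n = VCCas a b n"
| "cont_next CRet n = Idle"

definition finish :: "('p, 'v) state \<Rightarrow> 'p \<Rightarrow> 'v cont \<Rightarrow> nat \<Rightarrow> ('p, 'v) state" where
  "finish s p k n =
     setpc (if k = CCtor then s\<lparr>ctor_done := True\<rparr> else s) p (cont_next k n)"

text \<open>Initial state: S.timestamp = 0; node 0 is the node the constructor
  (with initial value v0) will create; it is not reachable before the
  constructor is invoked, since no operation on O may be invoked before
  the constructor has returned.\<close>
definition init_state :: "'v \<Rightarrow> ('p, 'v) state" where
  "init_state v0 = \<lparr>stamp = 0, vhead = 0, tsf = (\<lambda>_. None),
     valf = (\<lambda>_. undefined)(0 := v0), nxt = (\<lambda>_. None), alloc = 1,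
     ctor_started = False, ctor_done = False, pcs = (\<lambda>_. Idle)\<rparr>"

inductive step :: "'p \<Rightarrow> ('p, 'v) state \<Rightarrow> ('p, 'v) state \<Rightarrow> bool" where
  inv_ctor: "pcs s p = Idle \<Longrightarrow> \<not> ctor_started s \<Longrightarrow>
     step p s (setpc (s\<lparr>ctor_started := True\<rparr>) p (Init 0 IChk CCtor))"
| inv_take: "pcs s p = Idle \<Longrightarrow> step p s (setpc s p TakeRead)"
| inv_rs: "pcs s p = Idle \<Longrightarrow> ctor_done s \<Longrightarrow> step p s (setpc s p (RSHead t))"
| inv_vr: "pcs s p = Idle \<Longrightarrow> ctor_done s \<Longrightarrow> step p s (setpc s p VRHead)"
| inv_vc: "pcs s p = Idle \<Longrightarrow> ctor_done s \<Longrightarrow> step p s (setpc s p (VCHead a b))"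
| take_read: "pcs s p = TakeRead \<Longrightarrow> step p s (setpc s p (TakeCas (stamp s)))"
| take_cas: "pcs s p = TakeCas t \<Longrightarrow>
     step p s (setpc (if stamp s = t then s\<lparr>stamp := t + 1\<rparr> else s) p Idle)"
| init_chk_valid: "pcs s p = Init n IChk k \<Longrightarrow> tsf s n \<noteq> None \<Longrightarrow> step p s (finish s p k n)"
| init_chk_tbd: "pcs s p = Init n IChk k \<Longrightarrow> tsf s n = None \<Longrightarrow>
     step p s (setpc s p (Init n IRead k))"
| init_read: "pcs s p = Init n IRead k \<Longrightarrow> step p s (setpc s p (Init n (ICas (stamp s)) k))"
| init_cas: "pcs s p = Init n (ICas c) k \<Longrightarrow>
     step p s (finish (if tsf s n = None then s\<lparr>tsf := (tsf s)(n := Some c)\<rparr> else s) p k n)"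
| rs_head: "pcs s p = RSHead t \<Longrightarrow> step p s (setpc s p (Init (vhead s) IChk (CRS t)))"
| rs_stop: "pcs s p = RSLoop t n \<Longrightarrow> tsf s n = Some x \<Longrightarrow> x \<le> t \<Longrightarrow> step p s (setpc s p Idle)"
| rs_next: "pcs s p = RSLoop t n \<Longrightarrow> tsf s n = Some x \<Longrightarrow> x > t \<Longrightarrow> nxt s n = Some n' \<Longrightarrow>
     step p s (setpc s p (RSLoop t n'))"
| vr_head: "pcs s p = VRHead \<Longrightarrow> step p s (setpc s p (Init (vhead s) IChk CVR))"
| vc_head: "pcs s p = VCHead a b \<Longrightarrow> step p s (setpc s p (Init (vhead s) IChk (CVC a b)))"
| vc_ret: "pcs s p = VCCas a b h \<Longrightarrow> valf s h \<noteq> a \<or> b = a \<Longrightarrow> step p s (setpc s p Idle)"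
| vc_succ: "pcs s p = VCCas a b h \<Longrightarrow> valf s h = a \<Longrightarrow> b \<noteq> a \<Longrightarrow> vhead s = h \<Longrightarrow>
     step p s (setpc (s\<lparr>valf := (valf s)(alloc s := b), nxt := (nxt s)(alloc s := Some h),
                        tsf := (tsf s)(alloc s := None), alloc := Suc (alloc s),
                        vhead := alloc s\<rparr>) p (Init (alloc s) IChk CRet))"
| vc_fail: "pcs s p = VCCas a b h \<Longrightarrow> valf s h = a \<Longrightarrow> b \<noteq> a \<Longrightarrow> vhead s \<noteq> h \<Longrightarrow>
     step p s (setpc (s\<lparr>valf := (valf s)(alloc s := b), nxt := (nxt s)(alloc s := Some h),
                        tsf := (tsf s)(alloc s := None), alloc := Suc (alloc s)\<rparr>) p VCFailHead)"
| vc_fail_head: "pcs s p = VCFailHead \<Longrightarrow> step p s (setpc s p (Init (vhead s) IChk CRet))"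

text \<open>A (finite prefix of an) execution: states st 0 .. st N, where step i is
  taken by process act i.\<close>
definition execution :: "'v \<Rightarrow> (nat \<Rightarrow> ('p, 'v) state) \<Rightarrow> (nat \<Rightarrow> 'p) \<Rightarrow> nat \<Rightarrow> bool" where
  "execution v0 st act N \<longleftrightarrow> st 0 = init_state v0 \<and> (\<forall>i<N. step (act i) (st i) (st (Suc i)))"

end

theory Submission
  imports Defs
begin

(* A process inside initTS(n) always has n = VHead or n.ts valid.  The head is swung away from a
   node h only by a vCAS that has already completed initTS(h), so h.ts is valid by then; and a
   valid timestamp never becomes TBD again.  Hence whenever the CAS of initTS(n) finds n.ts = TBD,
   n is the head, and n.ts was already TBD, so n was the head, when S.timestamp was read. *)

definition ts_persistent :: "('p, 'v) state \<Rightarrow> ('p, 'v) state \<Rightarrow> bool" where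
  "ts_persistent s s' \<longleftrightarrow>
     alloc s \<le> alloc s' \<and> (\<forall>n < alloc s. tsf s n \<noteq> None \<longrightarrow> tsf s' n \<noteq> None)"

fun pc_inv :: "('p, 'v) state \<Rightarrow> 'v pc \<Rightarrow> bool" where
  "pc_inv s Idle = True"
| "pc_inv s TakeRead = True"
| "pc_inv s (TakeCas t) = True"
| "pc_inv s (Init n ph k) \<longleftrightarrow> ctor_started s \<and> n < alloc s \<and> (n = vhead s \<or> tsf s n \<noteq> None)"
| "pc_inv s (VCCas a b h) \<longleftrightarrow> ctor_started s \<and> h < alloc s \<and> tsf s h \<noteq> None"
| "pc_inv s x \<longleftrightarrow> ctor_started s"

(* Until the constructor starts, node 0 is the head-to-be and no process is inside an operation
   on O (all such program counters require ctor_started in pc_inv). *)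
definition object_inv :: "('p, 'v) state \<Rightarrow> bool" where
  "object_inv s \<longleftrightarrow> vhead s < alloc s \<and> (\<not> ctor_started s \<longrightarrow> vhead s = 0 \<and> \<not> ctor_done s)"

definition state_inv :: "('p, 'v) state \<Rightarrow> bool" where
  "state_inv s \<longleftrightarrow> object_inv s \<and> (\<forall>p. pc_inv s (pcs s p))"

lemma ts_persistent_trans:
  "ts_persistent s s' \<Longrightarrow> ts_persistent s' s'' \<Longrightarrow> ts_persistent s s''"
  by (auto simp: ts_persistent_def)

lemma ts_persistent_TBD:
  "ts_persistent s s' \<Longrightarrow> n < alloc s \<Longrightarrow> tsf s' n = None \<Longrightarrow> tsf s n = None"
  by (auto simp: ts_persistent_def)

lemma pc_inv_update_pcs [simp]: "pc_inv (s\<lparr>pcs := f\<rparr>) = pc_inv s"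
proof
  fix x
  show "pc_inv (s\<lparr>pcs := f\<rparr>) x = pc_inv s x"
    by (cases "(s, x)" rule: pc_inv.cases) auto
qed

lemma pc_inv_cont_next:
  "ctor_started s \<Longrightarrow> n < alloc s \<Longrightarrow> tsf s n \<noteq> None \<Longrightarrow> pc_inv s (cont_next k n)"
  by (cases k) auto

lemma pc_inv_stable:
  assumes "pc_inv s x" and "ts_persistent s s'" and "ctor_started s \<Longrightarrow> ctor_started s'"
    and "vhead s' = vhead s \<or> tsf s' (vhead s) \<noteq> None"
  shows "pc_inv s' x"
  using assms by (cases "(s, x)" rule: pc_inv.cases) (auto simp: ts_persistent_def)

lemma state_inv_Init_TBD_is_head:
  "state_inv s \<Longrightarrow> pcs s p = Init n ph k \<Longrightarrow> tsf s n = None \<Longrightarrow> vhead s = n"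
  by (metis pc_inv.simps(4) state_inv_def)

lemma state_inv_Init_alloc: "state_inv s \<Longrightarrow> pcs s p = Init n ph k \<Longrightarrow> n < alloc s"
  by (metis pc_inv.simps(4) state_inv_def)

lemma cont_next_neq_Init [simp]: "cont_next k n \<noteq> Init m ph k'"
  by (cases k) auto

lemma step_pcs_other: "step q s s' \<Longrightarrow> p \<noteq> q \<Longrightarrow> pcs s' p = pcs s p"
  by (induction rule: step.induct) (auto simp: setpc_def finish_def)

lemma step_into_ICas:
  "step p s s' \<Longrightarrow> pcs s' p = Init n (ICas c) k \<Longrightarrow> pcs s p = Init n IRead k"
  by (induction rule: step.induct) (auto simp: setpc_def finish_def)

lemma step_ts_persistent: "step q s s' \<Longrightarrow> ts_persistent s s'"
  by (induction rule: step.induct) (auto simp: ts_persistent_def setpc_def finish_def)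

lemma step_ctor_started_mono: "step q s s' \<Longrightarrow> ctor_started s \<Longrightarrow> ctor_started s'"
  by (induction rule: step.induct) (auto simp: setpc_def finish_def)

lemma step_head_moves_from_valid:
  "step q s s' \<Longrightarrow> pc_inv s (pcs s q) \<Longrightarrow> vhead s' = vhead s \<or> tsf s' (vhead s) \<noteq> None"
  by (induction rule: step.induct) (auto simp: setpc_def finish_def)

lemma step_object_inv:
  "step q s s' \<Longrightarrow> object_inv s \<Longrightarrow> pc_inv s (pcs s q) \<Longrightarrow> object_inv s'"
  by (induction rule: step.induct) (auto simp: setpc_def finish_def object_inv_def)

lemma step_pc_inv_acting:
  "step q s s' \<Longrightarrow> object_inv s \<Longrightarrow> pc_inv s (pcs s q) \<Longrightarrow> pc_inv s' (pcs s' q)"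
  by (induction rule: step.induct)
    (auto simp: setpc_def finish_def object_inv_def intro!: pc_inv_cont_next)

lemma step_state_inv:
  assumes step: "step q s s'" and inv: "state_inv s"
  shows "state_inv s'"
  unfolding state_inv_def
proof (intro conjI allI)
  have obj: "object_inv s" and pcs_inv: "\<And>p. pc_inv s (pcs s p)"
    using inv by (auto simp: state_inv_def)
  show "object_inv s'"
    using step_object_inv[OF step obj pcs_inv] .
  fix p
  show "pc_inv s' (pcs s' p)"
  proof (cases "p = q")
    case True
    then show ?thesis using step_pc_inv_acting[OF step obj pcs_inv] by simp
  next
    case False
    then have "pcs s' p = pcs s p" by (rule step_pcs_other[OF step])
    then show ?thesis
      using pc_inv_stable[OF pcs_inv step_ts_persistent[OF step]
          step_ctor_started_mono[OF step] step_head_moves_from_valid[OF step pcs_inv]]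
      by simp
  qed
qed

lemma state_inv_init_state: "state_inv (init_state v0)"
  by (simp add: state_inv_def object_inv_def init_state_def)

lemma execution_step:
  "execution v0 st act N \<Longrightarrow> i < N \<Longrightarrow> step (act i) (st i) (st (Suc i))"
  by (simp add: execution_def)

lemma execution_state_inv: "execution v0 st act N \<Longrightarrow> i \<le> N \<Longrightarrow> state_inv (st i)"
proof (induction i)
  case 0
  then show ?case by (simp add: execution_def state_inv_init_state)
next
  case (Suc i)
  then show ?case using step_state_inv execution_step by (metis Suc_le_lessD Suc_leD)
qed

lemma execution_ts_persistent:
  assumes exec: "execution v0 st act N" and "i \<le> m" and "m \<le> N"
  shows "ts_persistent (st i) (st m)"
  using assms(2,3)
proof (induction m rule: dec_induct)
  case base
  then show ?case by (simp add: ts_persistent_def)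
next
  case (step l)
  then have "l < N" by simp
  then have "ts_persistent (st l) (st (Suc l))"
    by (rule step_ts_persistent[OF execution_step[OF exec]])
  moreover have "ts_persistent (st i) (st l)" using step by simp
  ultimately show ?case by (blast intro: ts_persistent_trans)
qed

lemma execution_last_step_of:
  assumes exec: "execution v0 st act N" and "m \<le> N" and "pcs (st m) p \<noteq> Idle"
  shows "\<exists>i<m. act i = p \<and> (\<forall>l. i < l \<and> l < m \<longrightarrow> act l \<noteq> p) \<and>
           pcs (st (Suc i)) p = pcs (st m) p"
  using assms(2,3)
proof (induction m)
  case 0
  then show ?case using exec by (simp add: execution_def init_state_def)
next
  case (Suc m)
  show ?case
  proof (cases "act m = p")
    case True
    then show ?thesis by auto
  next
    case False
    then have "pcs (st (Suc m)) p = pcs (st m) p"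
      using step_pcs_other[OF execution_step[OF exec]] Suc.prems(1) by simp
    then show ?thesis using Suc False by (metis Suc_leD less_Suc_eq)
  qed
qed

theorem lemmaA4:
  fixes v0 :: 'v and st :: "nat \<Rightarrow> ('p, 'v) state" and act :: "nat \<Rightarrow> 'p"
    and N j n :: nat and c :: int and k :: "'v cont"
  assumes "execution v0 st act N"
    and "j < N"
    and "pcs (st j) (act j) = Init n (ICas c) k"
    and "tsf (st j) n = None"
  shows "vhead (st j) = n \<and>
    (\<exists>i<j. act i = act j \<and> pcs (st i) (act j) = Init n IRead k \<and>
           (\<forall>l. i < l \<and> l < j \<longrightarrow> act l \<noteq> act j) \<and> vhead (st i) = n)"
proof -
  note exec = assms(1)
  have head_at_cas: "vhead (st j) = n"
    using state_inv_Init_TBD_is_head[OF execution_state_inv[OF exec] assms(3,4)] assms(2) by simp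
  obtain i where "i < j" and "act i = act j"
    and no_steps: "\<forall>l. i < l \<and> l < j \<longrightarrow> act l \<noteq> act j"
    and "pcs (st (Suc i)) (act j) = Init n (ICas c) k"
    using execution_last_step_of[OF exec, of j "act j"] assms(2,3) by auto
  moreover have "step (act i) (st i) (st (Suc i))"
    using execution_step[OF exec] \<open>i < j\<close> assms(2) by simp
  ultimately have at_read: "pcs (st i) (act j) = Init n IRead k"
    by (metis step_into_ICas)
  have inv_i: "state_inv (st i)"
    using execution_state_inv[OF exec] \<open>i < j\<close> assms(2) by simp
  have "ts_persistent (st i) (st j)"
    using execution_ts_persistent[OF exec, of i j] \<open>i < j\<close> assms(2) by simp
  then have "tsf (st i) n = None"
    using ts_persistent_TBD state_inv_Init_alloc[OF inv_i at_read] assms(4) by blast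
  then have "vhead (st i) = n"
    using state_inv_Init_TBD_is_head[OF inv_i at_read] by simp
  then show ?thesis
    using head_at_cas \<open>i < j\<close> \<open>act i = act j\<close> at_read no_steps by blast
qed

end
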